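(* Let $p\in(0,1)$, $N=1/(1-p)$, $r\ge0$ an integer and $n\ge0$ even. If $G=(U,w,w')$ is a melonic graph of order $n$, then $$\frac{1}{(2n+1)^n}\,p^{(2n+1)r}\le \mathcal A_r(G).$$
   Context: Trees. A 2-rooted ternary tree of order $n$ is a finite plane tree $U$ with a root vertex of degree 2 and $n$ true vertices of degree 4; each edge is internal or a leaf (half-edge). Each true vertex $v$ has parent edge $e_1(v)$ (towards the root) and ordered children edges $e_2(v),e_3(v),e_4(v)$. One root edge has type $\alpha$, the other $\bar\alpha$; if $e_1(v)$ has type $\tau$ then $e_2(v)$ has the other type and $e_3(v),e_4(v)$ have type $\tau$. Leaves of type $\alpha$ are leaves, of type $\bar\alpha$ anti-leaves ($n+1$ each). A heap-ordering labels true vertices bijectively by $\{1,\dots,n\}$, increasing from parent to child. Graphs. For even $n$, a graph of order $n$ is $G=(U,w,w')$: $U$ heap-ordered; $w$ a bijection leaves $\to$ anti-leaves (dashed edges; internal edges are solid); $w'$ a partition of true vertices into $n/2$ pairs (wavy edges) with, for each pair $\{v,v'\}$ ($v$ of smaller label), one of eight propagators in $(S,j,k)=(S_v,j_v,k_v)$, $(S',j',k')=(S_{v'},j_{v'},k_{v'})$: $\delta_{jj'}\delta_{kk'}$, $\delta_{j,S-j'}\delta_{kk'}$, $\delta_{jj'}\delta_{k,S-k'}$, $\delta_{j,S-j'}\delta_{k,S-k'}$, $\delta_{jk'}\delta_{kj'}$, $\delta_{j,S-k'}\delta_{kj'}$, $\delta_{jk'}\delta_{k,S-j'}$, $\delta_{j,S-k'}\delta_{k,S-j'}$,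 together with $S=S'$. Amplitude. A momentum attribution gives each true vertex $S_v\ge0$, $0\le j_v,k_v\le S_v$ and momenta $j_v,S_v-j_v,k_v,S_v-k_v$ to the ends at $v$ of $e_1,\dots,e_4$. It is admissible (for root momentum $r$) if solid edges get equal momenta at both ends, both root edges carry momentum $r$, every dashed edge $e$ joins leaves of equal momentum $m(e)$, and every wavy edge satisfies $S_v=S_{v'}$ and its propagator. $\mathcal A_r(G):=N^{-n}\sum_{\text{admissible}}\prod_{e\text{ dashed}}p^{m(e)}$. Melonic graphs. Each propagator (with $S=S'$) induces a bijection from the edge-ends at $v$ to those at $v'$ (matching identified momenta). For two true vertices joined by three edges, the leading propagator is the one whose bijection maps the $v$-end of each joining edge to its $v'$-end. The trivial graph ($n=0$) is the root with a leaf and an anti-leaf joined by a dashed edge. A graph is melonic if (ignoring heap-orderings) it arises from the trivial graph by repeatedly inserting two new true vertices $v,v'$, joined to each other by three edges and by a wavy edge carrying the leading propagator, in one of these ways: (I) into a dashed edge $\{x,y\}$: $e_1(v)$ at $x$, $e_1(v')$ at $y$, dashed edges $e_2(v)$–$e_2(v')$ and $\{e_3(v),e_4(v)\}$ bijectively to $\{e_3(v'),e_4(v')\}$; (II) into a dashed edge $\{z,z'\}$: $e_1(v)$ at $z$, $e_1(v')=e_2(v)$, dashed edges $e_2(v')$–$z'$ and $\{e_3(v),e_4(v)\}$ bijectively to $\{e_3(v'),e_4(v')\}$; (III) into a dashed edge $\{z,z'\}$: $e_1(v)$ at $z$, $e_1(v')=e_a(v)$ ($a\in\{3,4\}$, $b$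 the other), dashed edges $e_2(v)$–(one of $e_3(v'),e_4(v')$), $e_b(v)$–$e_2(v')$, remaining child leaf of $v'$–$z'$; (IIs) into a solid edge from $u$ to child $z$: $v$ below $u$, $e_1(v')=e_2(v)$, $e_1(z)=e_2(v')$, dashed edges $\{e_3(v),e_4(v)\}$ bijectively to $\{e_3(v'),e_4(v')\}$; (IIIs) as (IIs) but $e_1(v')=e_a(v)$, $a\in\{3,4\}$, $e_1(z)=e_c(v')$, $c\in\{3,4\}$, dashed edges $e_2(v)$–(other of $e_3(v'),e_4(v')$) and $e_b(v)$–$e_2(v')$. *)

theory Defs
  imports "HOL-Analysis.Analysis"
begin

text \<open>An edge-end is a pair (u,i): u = 0 is the root (slots i = 1,2, the two ordered
root edges); u \<in> {1..n} is a true vertex (identified with its heap label) and slot i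
is the end of e_i(u), i = 1..4.  The tree structure is given by par v = the end
(at the parent vertex) to which the parent edge e_1(v) is attached.\<close>

type_synonym vend = "nat \<times> nat"

text \<open>Type of edges: True = alpha, False = anti-alpha.  Convention: the first root
edge has type alpha, the second type anti-alpha.  The first argument is fuel
(depth bound).\<close>
fun etype :: "nat \<Rightarrow> (nat \<Rightarrow> vend) \<Rightarrow> vend \<Rightarrow> bool" where
  "etype 0 P e = (snd e = 1)"
| "etype (Suc f) P (u, i) =
     (if u = 0 then i = 1
      else (if i = 2 then \<not> etype f P (P u) else etype f P (P u)))"

record graph =
  par :: "nat \<Rightarrow> vend"
  wd  :: "vend \<Rightarrow> vend"                  \<comment> \<open>w : leaves \<rightarrow> anti-leaves (dashed edges)\<close>
  wv  :: "(nat \<times> nat \<times> nat) set"         \<comment> \<open>w': wavy edges (v, v', t), v < v', propagator t\<close>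

definition child_ends :: "nat \<Rightarrow> vend set" where
  "child_ends n = {(0,1),(0,2)} \<union> {(u,i). u \<in> {1..n} \<and> i \<in> {2,3,4}}"

definition is_alpha :: "nat \<Rightarrow> graph \<Rightarrow> vend \<Rightarrow> bool" where
  "is_alpha n G e = etype (Suc n) (par G) e"

definition leaf_ends :: "nat \<Rightarrow> graph \<Rightarrow> vend set" where
  "leaf_ends n G = child_ends n - par G ` {1..n}"

definition leaves :: "nat \<Rightarrow> graph \<Rightarrow> vend set" where
  "leaves n G = {e \<in> leaf_ends n G. is_alpha n G e}"

definition antileaves :: "nat \<Rightarrow> graph \<Rightarrow> vend set" where
  "antileaves n G = {e \<in> leaf_ends n G. \<not> is_alpha n G e}"

definition dashed :: "nat \<Rightarrow> graph \<Rightarrow> vend set set" where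
  "dashed n G = {{x, wd G x} | x. x \<in> leaves n G}"

text \<open>G is a graph of order n: heap-ordered 2-rooted ternary tree on the true
vertices 1..n, bijection w from leaves to anti-leaves, and a partition of the true
vertices into pairs, each carrying one of the eight propagators (indexed 0..7,
oriented from the smaller label to the larger).\<close>
definition is_graph :: "nat \<Rightarrow> graph \<Rightarrow> bool" where
  "is_graph n G \<longleftrightarrow>
     even n \<and>
     (\<forall>v\<in>{1..n}. par G v \<in> child_ends n \<and> fst (par G v) < v) \<and>
     inj_on (par G) {1..n} \<and>
     bij_betw (wd G) (leaves n G) (antileaves n G) \<and>
     (\<forall>(a, b, t)\<in>wv G. 1 \<le> a \<and> a < b \<and> b \<le> n \<and> t < 8) \<and>
     (\<forall>v\<in>{1..n}. \<exists>!x. x \<in> wv G \<and> (fst x = v \<or> fst (snd x) = v))"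

fun prop_ok :: "nat \<Rightarrow> nat \<times> nat \<times> nat \<Rightarrow> nat \<times> nat \<times> nat \<Rightarrow> bool" where
  "prop_ok t (S, j, k) (S', j', k') =
     (S = S' \<and>
      (if t = 0 then j = j' \<and> k = k'
       else if t = 1 then j = S - j' \<and> k = k'
       else if t = 2 then j = j' \<and> k = S - k'
       else if t = 3 then j = S - j' \<and> k = S - k'
       else if t = 4 then j = k' \<and> k = j'
       else if t = 5 then j = S - k' \<and> k = j'
       else if t = 6 then j = k' \<and> k = S - j'
       else j = S - k' \<and> k = S - j'))"

definition mom :: "nat \<Rightarrow> (nat \<Rightarrow> nat) \<Rightarrow> (nat \<Rightarrow> nat) \<Rightarrow> (nat \<Rightarrow> nat) \<Rightarrow> vend \<Rightarrow> nat" where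
  "mom r S j k e = (let (u, i) = e in
     if u = 0 then r
     else if i = 1 then j u else if i = 2 then S u - j u else if i = 3 then k u else S u - k u)"

type_synonym attribution = "(nat \<Rightarrow> nat) \<times> (nat \<Rightarrow> nat) \<times> (nat \<Rightarrow> nat)"

definition admissible :: "nat \<Rightarrow> nat \<Rightarrow> graph \<Rightarrow> attribution \<Rightarrow> bool" where
  "admissible n r G A \<longleftrightarrow> (case A of (S, j, k) \<Rightarrow>
     (\<forall>v. v \<notin> {1..n} \<longrightarrow> S v = 0 \<and> j v = 0 \<and> k v = 0) \<and>
     (\<forall>v\<in>{1..n}. j v \<le> S v \<and> k v \<le> S v) \<and>
     (\<forall>v\<in>{1..n}. mom r S j k (v, 1) = mom r S j k (par G v)) \<and>
     (\<forall>x\<in>leaves n G. mom r S j k x = mom r S j k (wd G x)) \<and>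
     (\<forall>(a, b, t)\<in>wv G. prop_ok t (S a, j a, k a) (S b, j b, k b)))"

text \<open>A_r(G) = N^{-n} * sum over admissible attributions of the product over dashed
edges {x, w x} (x a leaf) of p^{m(e)}; as an (always defined) sum in ennreal.\<close>
definition amplitude :: "real \<Rightarrow> nat \<Rightarrow> nat \<Rightarrow> graph \<Rightarrow> ennreal" where
  "amplitude p n r G =
     ennreal (1 / (1 / (1 - p)) ^ n) *
     (\<Sum>\<^sub>\<infinity>A\<in>{A. admissible n r G A}.
        (case A of (S, j, k) \<Rightarrow> ennreal (\<Prod>x\<in>leaves n G. p ^ mom r S j k x)))"

text \<open>Bijection on edge-ends (slots 1..4 at v to slots at v') induced by propagator t.\<close>
definition pbij :: "nat \<Rightarrow> nat \<Rightarrow> nat" where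
  "pbij t i = [[1,2,3,4],[2,1,3,4],[1,2,4,3],[2,1,4,3],
               [3,4,1,2],[4,3,1,2],[3,4,2,1],[4,3,2,1]] ! t ! (i - 1)"

text \<open>Unlabelled (not heap-ordered) structures used in the melonic construction:
vertex names are arbitrary nonzero naturals, root is 0, dashed edges as unordered
pairs of ends, wavy edges as oriented triples (a, b, t).\<close>
record pre =
  pV :: "nat set"
  pP :: "nat \<Rightarrow> vend"
  pD :: "vend set set"
  pW :: "(nat \<times> nat \<times> nat) set"

text \<open>wt is a wavy edge between the new vertices v, v' carrying the leading propagator,
J listing the joining edges as (slot at v, slot at v').  Either orientation of
storage is allowed; the bijection of the stored propagator goes from the first
to the second stored vertex.\<close>
definition leading_wavy :: "nat \<Rightarrow> nat \<Rightarrow> (nat \<times> nat) list \<Rightarrow> nat \<times> nat \<times> nat \<Rightarrow> bool" where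
  "leading_wavy v v' J wt \<longleftrightarrow>
     (\<exists>t<8. wt = (v, v', t) \<and> (\<forall>(i, i')\<in>set J. pbij t i = i')) \<or>
     (\<exists>t<8. wt = (v', v, t) \<and> (\<forall>(i, i')\<in>set J. pbij t i' = i))"

definition fresh2 :: "pre \<Rightarrow> nat \<Rightarrow> nat \<Rightarrow> bool" where
  "fresh2 M v v' \<longleftrightarrow> v \<noteq> v' \<and> v \<noteq> 0 \<and> v' \<noteq> 0 \<and> v \<notin> pV M \<and> v' \<notin> pV M"

inductive_set melonic_pre :: "pre set" where
  trivial: "\<lparr>pV = {}, pP = (\<lambda>_. (0, 0)), pD = {{(0,1), (0,2)}}, pW = {}\<rparr> \<in> melonic_pre"
| ins_I: "\<lbrakk>M \<in> melonic_pre; fresh2 M v v'; {x, y} \<in> pD M; x \<noteq> y; c \<in> {3,4};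
          leading_wavy v v' [(2,2), (3,c), (4,7-c)] wt\<rbrakk> \<Longrightarrow>
   \<lparr>pV = pV M \<union> {v, v'}, pP = (pP M)(v := x, v' := y),
    pD = (pD M - {{x, y}}) \<union> {{(v,2),(v',2)}, {(v,3),(v',c)}, {(v,4),(v',7-c)}},
    pW = pW M \<union> {wt}\<rparr> \<in> melonic_pre"
| ins_II: "\<lbrakk>M \<in> melonic_pre; fresh2 M v v'; {z, z'} \<in> pD M; z \<noteq> z'; c \<in> {3,4};
          leading_wavy v v' [(2,1), (3,c), (4,7-c)] wt\<rbrakk> \<Longrightarrow>
   \<lparr>pV = pV M \<union> {v, v'}, pP = (pP M)(v := z, v' := (v,2)),
    pD = (pD M - {{z, z'}}) \<union> {{(v',2), z'}, {(v,3),(v',c)}, {(v,4),(v',7-c)}},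
    pW = pW M \<union> {wt}\<rparr> \<in> melonic_pre"
| ins_III: "\<lbrakk>M \<in> melonic_pre; fresh2 M v v'; {z, z'} \<in> pD M; z \<noteq> z'; a \<in> {3,4}; c \<in> {3,4};
          leading_wavy v v' [(a,1), (2,c), (7-a,2)] wt\<rbrakk> \<Longrightarrow>
   \<lparr>pV = pV M \<union> {v, v'}, pP = (pP M)(v := z, v' := (v,a)),
    pD = (pD M - {{z, z'}}) \<union> {{(v,2),(v',c)}, {(v,7-a),(v',2)}, {(v',7-c), z'}},
    pW = pW M \<union> {wt}\<rparr> \<in> melonic_pre"
| ins_IIs: "\<lbrakk>M \<in> melonic_pre; fresh2 M v v'; z \<in> pV M; c \<in> {3,4};
          leading_wavy v v' [(2,1), (3,c), (4,7-c)] wt\<rbrakk> \<Longrightarrow>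
   \<lparr>pV = pV M \<union> {v, v'}, pP = (pP M)(v := pP M z, v' := (v,2), z := (v',2)),
    pD = pD M \<union> {{(v,3),(v',c)}, {(v,4),(v',7-c)}},
    pW = pW M \<union> {wt}\<rparr> \<in> melonic_pre"
| ins_IIIs: "\<lbrakk>M \<in> melonic_pre; fresh2 M v v'; z \<in> pV M; a \<in> {3,4}; c \<in> {3,4};
          leading_wavy v v' [(a,1), (2,7-c), (7-a,2)] wt\<rbrakk> \<Longrightarrow>
   \<lparr>pV = pV M \<union> {v, v'}, pP = (pP M)(v := pP M z, v' := (v,a), z := (v',c)),
    pD = pD M \<union> {{(v,2),(v',7-c)}, {(v,7-a),(v',2)}},
    pW = pW M \<union> {wt}\<rparr> \<in> melonic_pre"

definition mape :: "(nat \<Rightarrow> nat) \<Rightarrow> vend \<Rightarrow> vend" where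
  "mape \<sigma> e = (\<sigma> (fst e), snd e)"

definition melonic :: "nat \<Rightarrow> graph \<Rightarrow> bool" where
  "melonic n G \<longleftrightarrow> is_graph n G \<and>
     (\<exists>M \<sigma>. M \<in> melonic_pre \<and> \<sigma> 0 = 0 \<and> bij_betw \<sigma> (pV M) {1..n} \<and>
        (\<forall>v\<in>pV M. par G (\<sigma> v) = mape \<sigma> (pP M v)) \<and>
        dashed n G = (\<lambda>d. mape \<sigma> ` d) ` pD M \<and>
        wv G = (\<lambda>(a, b, t). (\<sigma> a, \<sigma> b, t)) ` pW M)"

end

theory Submission
  imports Defs
begin

text \<open>
  A melonic graph arises from the trivial graph by \<open>n/2\<close> insertions of a melon: two vertices
  \<open>v, v'\<close> joined by three edges and by a wavy edge carrying the leading propagator. Take an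
  admissible attribution before an insertion and let \<open>m\<close> be the momentum on the edge-end where
  \<open>v\<close> is attached. For arbitrary \<open>a, b\<close> put \<open>S v = S v' = m + a + b\<close>, \<open>j v = m\<close> and \<open>k v = b\<close>;
  the leading propagator copies the momenta of the three joining edges from \<open>v\<close> to \<open>v'\<close>, and as
  the four momenta at a vertex add up to \<open>2 S\<close>, the remaining end of \<open>v'\<close> again carries \<open>m\<close>.
  So the attribution extends, and iterating gives an injection of \<open>\<nat>\<^sup>n\<close> into the admissible
  attributions of \<open>G\<close> in which the attribution with index \<open>x\<close> has all momenta at most
  \<open>r + \<Sum>x\<close>. Since \<open>G\<close> has \<open>n + 1\<close> leaves, that attribution contributes at least
  \<open>p\<^bsup>(n+1)(r+\<Sum>x)\<^esup>\<close>; summing the geometric series gives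
  \<open>A\<^sub>r(G) \<ge> p\<^bsup>(n+1)r\<^esup> ((1 - p) / (1 - p\<^bsup>n+1\<^esup>))\<^sup>n\<close>, and
  \<open>1 - p\<^bsup>n+1\<^esup> \<le> (n + 1)(1 - p) \<le> (2n + 1)(1 - p)\<close>.
\<close>

section \<open>Geometric lower bounds\<close>

lemma prod_power_ge:
  fixes p :: real
  assumes "finite L" "card L \<le> N" "0 \<le> p" "p \<le> 1" "\<And>x. x \<in> L \<Longrightarrow> f x \<le> B"
  shows "(p ^ B) ^ N \<le> (\<Prod>x\<in>L. p ^ f x)"
proof -
  have "(p ^ B) ^ N \<le> (p ^ B) ^ card L"
    by (rule power_decreasing) (use assms in \<open>auto intro: power_le_one\<close>)
  also have "\<dots> = (\<Prod>x\<in>L. p ^ B)" by simp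
  also have "\<dots> \<le> (\<Prod>x\<in>L. p ^ f x)"
    by (rule prod_mono) (use assms in \<open>auto intro: power_decreasing\<close>)
  finally show ?thesis .
qed

definition bounded_lists :: "nat \<Rightarrow> nat \<Rightarrow> nat list set" where
  "bounded_lists K n = {xs. length xs = n \<and> set xs \<subseteq> {..<K}}"

lemma finite_bounded_lists: "finite (bounded_lists K n)"
  unfolding bounded_lists_def using finite_lists_length_eq[of "{..<K}" n]
  by (simp add: conj_commute)

lemma bounded_lists_Suc:
  "bounded_lists K (Suc n) = (\<lambda>(a, xs). a # xs) ` ({..<K} \<times> bounded_lists K n)"
  unfolding bounded_lists_def by (auto simp: length_Suc_conv image_iff)

lemma sum_bounded_lists_power:
  fixes q :: "'a :: comm_semiring_1"
  shows "(\<Sum>xs\<in>bounded_lists K n. q ^ sum_list xs) = (\<Sum>a<K. q ^ a) ^ n"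
proof (induction n)
  case 0
  have "bounded_lists K 0 = {[]}" unfolding bounded_lists_def by auto
  then show ?case by simp
next
  case (Suc n)
  have inj: "inj_on (\<lambda>(a, xs). a # xs) ({..<K} \<times> bounded_lists K n)"
    by (auto simp: inj_on_def)
  have "(\<Sum>xs\<in>bounded_lists K (Suc n). q ^ sum_list xs) =
      (\<Sum>(a, xs)\<in>{..<K} \<times> bounded_lists K n. q ^ a * q ^ sum_list xs)"
    unfolding bounded_lists_Suc by (subst sum.reindex[OF inj]) (simp add: split_def power_add)
  also have "\<dots> = (\<Sum>a<K. q ^ a) * (\<Sum>xs\<in>bounded_lists K n. q ^ sum_list xs)"
    by (simp add: sum.cartesian_product[symmetric] sum_product)
  finally show ?case using Suc by simp
qed

lemma geometric_family_le_infsum: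
  fixes w :: "'a \<Rightarrow> ennreal" and c q :: real
  assumes inj: "inj_on F {xs. length xs = n}" and into: "\<And>xs. length xs = n \<Longrightarrow> F xs \<in> A"
    and le: "\<And>xs. length xs = n \<Longrightarrow> ennreal (c * q ^ sum_list xs) \<le> w (F xs)"
    and c: "0 \<le> c" and q: "0 \<le> q" "q < 1"
  shows "ennreal (c * (1 / (1 - q)) ^ n) \<le> (\<Sum>\<^sub>\<infinity>a\<in>A. w a)"
proof -
  have partial: "ennreal (c * (\<Sum>i<K. q ^ i) ^ n) \<le> (\<Sum>\<^sub>\<infinity>a\<in>A. w a)" for K
  proof -
    have sub: "bounded_lists K n \<subseteq> {xs. length xs = n}" by (auto simp: bounded_lists_def)
    have "ennreal (c * (\<Sum>i<K. q ^ i) ^ n) =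
        (\<Sum>xs\<in>bounded_lists K n. ennreal (c * q ^ sum_list xs))"
      using c q by (simp add: sum_bounded_lists_power sum_distrib_left[symmetric] sum_ennreal)
    also have "\<dots> \<le> (\<Sum>xs\<in>bounded_lists K n. w (F xs))"
      by (rule sum_mono) (use le sub in auto)
    also have "\<dots> = (\<Sum>a\<in>F ` bounded_lists K n. w a)"
      by (rule sum.reindex[symmetric, unfolded comp_def]) (rule inj_on_subset[OF inj sub])
    also have "\<dots> = (\<Sum>\<^sub>\<infinity>a\<in>F ` bounded_lists K n. w a)"
      using finite_bounded_lists by simp
    also have "\<dots> \<le> (\<Sum>\<^sub>\<infinity>a\<in>A. w a)"
      by (rule infsum_mono_neutral)
        (use into sub in \<open>auto intro: nonneg_summable_on_complete\<close>)
    finally show ?thesis .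
  qed
  have "(\<lambda>K. ennreal (c * (\<Sum>i<K. q ^ i) ^ n)) \<longlonglongrightarrow> ennreal (c * (1 / (1 - q)) ^ n)"
    using geometric_sums[of q] q unfolding sums_def
    by (intro tendsto_ennrealI tendsto_mult tendsto_const tendsto_power) simp
  then show ?thesis by (rule LIMSEQ_le_const2) (use partial in blast)
qed

lemma one_minus_power_le:
  fixes p :: real
  assumes "0 \<le> p" "p \<le> 1"
  shows "1 - p ^ m \<le> real m * (1 - p)"
proof -
  have "(\<Sum>i<m. p ^ i) \<le> (\<Sum>i<m. 1)"
    by (rule sum_mono) (use assms in \<open>auto intro: power_le_one\<close>)
  then have "(1 - p) * (\<Sum>i<m. p ^ i) \<le> (1 - p) * real m"
    using assms by (intro mult_left_mono) auto
  then show ?thesis by (simp add: one_diff_power_eq mult.commute)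
qed

lemma geometric_factor_lower_bound:
  fixes p :: real
  assumes p: "0 < p" "p < 1"
  shows "p ^ ((2 * n + 1) * r) / (2 * real n + 1) ^ n \<le>
     1 / (1 / (1 - p)) ^ n * (p ^ ((n + 1) * r) * (1 / (1 - p ^ (n + 1))) ^ n)"
proof -
  have q: "0 < 1 - p ^ (n + 1)" using power_strict_decreasing[of 0 "n + 1" p] p by simp
  have "1 - p ^ (n + 1) \<le> real (n + 1) * (1 - p)" by (rule one_minus_power_le) (use p in auto)
  also have "\<dots> \<le> (2 * real n + 1) * (1 - p)" by (rule mult_right_mono) (use p in auto)
  finally have "(1 - p) / ((2 * real n + 1) * (1 - p)) \<le> (1 - p) / (1 - p ^ (n + 1))"
    by (rule divide_left_mono) (use p q in auto)
  then have "1 / (2 * real n + 1) \<le> (1 - p) / (1 - p ^ (n + 1))" using p by simp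
  then have "(1 / (2 * real n + 1)) ^ n \<le> ((1 - p) / (1 - p ^ (n + 1))) ^ n"
    by (rule power_mono) simp
  moreover have "p ^ ((2 * n + 1) * r) \<le> p ^ ((n + 1) * r)"
    by (rule power_decreasing) (use p in auto)
  ultimately have "p ^ ((2 * n + 1) * r) * (1 / (2 * real n + 1)) ^ n \<le>
      p ^ ((n + 1) * r) * ((1 - p) / (1 - p ^ (n + 1))) ^ n"
    by (intro mult_mono) (use p in auto)
  then show ?thesis by (simp add: power_divide power_one_over mult.commute)
qed

section \<open>Vertex momenta and propagators\<close>

text \<open>Unfolding \<open>prop_ok\<close> into its eight cases makes simplification very slow; it is done only
  in the two partner lemmas below.\<close>
declare prop_ok.simps [simp del]

definition slot_mom :: "nat \<Rightarrow> nat \<Rightarrow> nat \<Rightarrow> nat \<Rightarrow> nat" where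
  "slot_mom s j k i = (if i = 1 then j else if i = 2 then s - j else if i = 3 then k else s - k)"

lemma slot_mom_1 [simp]: "slot_mom s j k (Suc 0) = j"
  by (simp add: slot_mom_def)

lemma mom_vertex: "u \<noteq> 0 \<Longrightarrow> mom r S j k (u, i) = slot_mom (S u) (j u) (k u) i"
  by (simp add: mom_def slot_mom_def)

lemma mom_root: "mom r S j k (0, i) = r"
  by (simp add: mom_def)

lemma mom_le_max:
  "j (fst e) \<le> S (fst e) \<Longrightarrow> k (fst e) \<le> S (fst e) \<Longrightarrow> mom r S j k e \<le> max r (S (fst e))"
  by (cases e) (auto simp: mom_def)

lemma mom_cong:
  "S' (fst e) = S (fst e) \<Longrightarrow> j' (fst e) = j (fst e) \<Longrightarrow> k' (fst e) = k (fst e) \<Longrightarrow>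
   mom r S' j' k' e = mom r S j k e"
  by (cases e) (simp add: mom_def)

lemma mom_insert_old:
  "fst e \<noteq> v \<Longrightarrow> fst e \<noteq> v' \<Longrightarrow>
   mom r (S(v := s, v' := s')) (j(v := a, v' := a')) (k(v := b, v' := b')) e = mom r S j k e"
  by (rule mom_cong) simp_all

lemma prop_ok_forward_partner:
  assumes "t < 8" "j \<le> s" "k \<le> s"
  obtains j' k' where "j' \<le> s" "k' \<le> s" "prop_ok t (s, j, k) (s, j', k')"
    "\<And>i. i \<in> {1,2,3,4} \<Longrightarrow> slot_mom s j' k' (pbij t i) = slot_mom s j k i"
proof -
  define w where "w = [(j,k), (s-j,k), (j,s-k), (s-j,s-k), (k,j), (k,s-j), (s-k,j), (s-k,s-j)] ! t"
  have "t = 0 \<or> t = 1 \<or> t = 2 \<or> t = 3 \<or> t = 4 \<or> t = 5 \<or> t = 6 \<or> t = 7" using assms(1) by arith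
  then have "fst w \<le> s \<and> snd w \<le> s \<and> prop_ok t (s, j, k) (s, fst w, snd w) \<and>
      (\<forall>i\<in>{1,2,3,4}. slot_mom s (fst w) (snd w) (pbij t i) = slot_mom s j k i)"
    using assms(2,3) by (elim disjE) (auto simp: w_def pbij_def slot_mom_def prop_ok.simps)
  then show thesis using that by blast
qed

lemma prop_ok_backward_partner:
  assumes "t < 8" "j \<le> s" "k \<le> s"
  obtains j' k' where "j' \<le> s" "k' \<le> s" "prop_ok t (s, j', k') (s, j, k)"
    "\<And>i. i \<in> {1,2,3,4} \<Longrightarrow> slot_mom s j k (pbij t i) = slot_mom s j' k' i"
proof -
  define w where "w = [(j,k), (s-j,k), (j,s-k), (s-j,s-k), (k,j), (s-k,j), (k,s-j), (s-k,s-j)] ! t"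
  have "t = 0 \<or> t = 1 \<or> t = 2 \<or> t = 3 \<or> t = 4 \<or> t = 5 \<or> t = 6 \<or> t = 7" using assms(1) by arith
  then have "fst w \<le> s \<and> snd w \<le> s \<and> prop_ok t (s, fst w, snd w) (s, j, k) \<and>
      (\<forall>i\<in>{1,2,3,4}. slot_mom s j k (pbij t i) = slot_mom s (fst w) (snd w) i)"
    using assms(2,3) by (elim disjE) (auto simp: w_def pbij_def slot_mom_def prop_ok.simps)
  then show thesis using that by blast
qed

definition wavy_ok :: "attribution \<Rightarrow> nat \<times> nat \<times> nat \<Rightarrow> bool" where
  "wavy_ok A w \<longleftrightarrow>
     (case A of (S, j, k) \<Rightarrow> case w of (a, b, t) \<Rightarrow> prop_ok t (S a, j a, k a) (S b, j b, k b))"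

lemma leading_wavy_partner:
  assumes lw: "leading_wavy v v' J wt" and vv': "v \<noteq> v'"
    and J: "set J \<subseteq> {1,2,3,4} \<times> {1,2,3,4}" and "m \<le> s" "b \<le> s"
  obtains j' k' where "j' \<le> s" "k' \<le> s"
    "\<And>i i'. (i, i') \<in> set J \<Longrightarrow> slot_mom s j' k' i' = slot_mom s m b i"
    "wavy_ok (S(v := s, v' := s), j(v := m, v' := j'), k(v := b, v' := k')) wt"
  using lw unfolding leading_wavy_def
proof (elim disjE exE conjE)
  fix t assume t: "t < 8" "wt = (v, v', t)" and bij: "\<forall>(i, i')\<in>set J. pbij t i = i'"
  obtain j' k' where "j' \<le> s" "k' \<le> s" "prop_ok t (s, m, b) (s, j', k')"
    and slots: "\<And>i. i \<in> {1,2,3,4} \<Longrightarrow> slot_mom s j' k' (pbij t i) = slot_mom s m b i"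
    using prop_ok_forward_partner[OF t(1) \<open>m \<le> s\<close> \<open>b \<le> s\<close>] by blast
  moreover have "slot_mom s j' k' i' = slot_mom s m b i" if "(i, i') \<in> set J" for i i'
  proof -
    have "i \<in> {1,2,3,4}" "pbij t i = i'" using that J bij by auto
    then show ?thesis using slots by metis
  qed
  ultimately show thesis using that t(2) vv' by (simp add: wavy_ok_def)
next
  fix t assume t: "t < 8" "wt = (v', v, t)" and bij: "\<forall>(i, i')\<in>set J. pbij t i' = i"
  obtain j' k' where "j' \<le> s" "k' \<le> s" "prop_ok t (s, j', k') (s, m, b)"
    and slots: "\<And>i. i \<in> {1,2,3,4} \<Longrightarrow> slot_mom s m b (pbij t i) = slot_mom s j' k' i"
    using prop_ok_backward_partner[OF t(1) \<open>m \<le> s\<close> \<open>b \<le> s\<close>] by blast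
  moreover have "slot_mom s j' k' i' = slot_mom s m b i" if "(i, i') \<in> set J" for i i'
  proof -
    have "i' \<in> {1,2,3,4}" "pbij t i' = i" using that J bij by auto
    then show ?thesis using slots by metis
  qed
  ultimately show thesis using that t(2) vv' by (simp add: wavy_ok_def)
qed

section \<open>Unlabelled melonic structures\<close>

definition wf_pre :: "pre \<Rightarrow> bool" where
  "wf_pre M \<longleftrightarrow> finite (pV M) \<and> 0 \<notin> pV M \<and>
     (\<forall>u\<in>pV M. fst (pP M u) \<in> insert 0 (pV M)) \<and>
     (\<forall>d\<in>pD M. \<forall>e\<in>d. fst e \<in> insert 0 (pV M)) \<and>
     (\<forall>(a, b, t)\<in>pW M. a \<in> pV M \<and> b \<in> pV M)"

lemma wf_pre_parentD: "wf_pre M \<Longrightarrow> u \<in> pV M \<Longrightarrow> fst (pP M u) \<in> insert 0 (pV M)"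
  by (simp add: wf_pre_def)

lemma wf_pre_dashedD: "wf_pre M \<Longrightarrow> d \<in> pD M \<Longrightarrow> e \<in> d \<Longrightarrow> fst e \<in> insert 0 (pV M)"
  unfolding wf_pre_def by blast

lemma wf_pre_wavyD: "wf_pre M \<Longrightarrow> (a, b, t) \<in> pW M \<Longrightarrow> a \<in> pV M \<and> b \<in> pV M"
  unfolding wf_pre_def by blast

lemma leading_wavy_ends:
  "leading_wavy v v' J wt \<Longrightarrow> fst wt \<in> {v, v'} \<and> fst (snd wt) \<in> {v, v'}"
  unfolding leading_wavy_def by auto

lemma wf_pre_insert:
  assumes wf: "wf_pre M" and fr: "fresh2 M v v'" and lw: "leading_wavy v v' J wt"
    and par: "\<And>u. u \<in> pV M \<union> {v, v'} \<Longrightarrow> fst (P u) \<in> insert 0 (pV M \<union> {v, v'})"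
    and dashed: "\<And>d e. d \<in> D \<Longrightarrow> d \<notin> pD M \<Longrightarrow> e \<in> d \<Longrightarrow> fst e \<in> insert 0 (pV M \<union> {v, v'})"
  shows "wf_pre \<lparr>pV = pV M \<union> {v, v'}, pP = P, pD = D, pW = pW M \<union> {wt}\<rparr>"
proof -
  have "fst e \<in> insert 0 (pV M \<union> {v, v'})" if "d \<in> D" "e \<in> d" for d e
    using wf dashed[OF that(1) _ that(2)] that(2) unfolding wf_pre_def by blast
  moreover have "\<forall>(a, b, t)\<in>pW M \<union> {wt}. a \<in> pV M \<union> {v, v'} \<and> b \<in> pV M \<union> {v, v'}"
    using wf leading_wavy_ends[OF lw] unfolding wf_pre_def by auto
  ultimately show ?thesis
    using wf fr par unfolding wf_pre_def fresh2_def by simp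
qed

lemma wf_pre_melonic: "M \<in> melonic_pre \<Longrightarrow> wf_pre M"
proof (induction rule: melonic_pre.induct)
  case trivial
  then show ?case by (simp add: wf_pre_def)
next
  case (ins_I M v v' x y c wt)
  have ends: "fst x \<in> insert 0 (pV M)" "fst y \<in> insert 0 (pV M)"
    using wf_pre_dashedD[OF ins_I.IH ins_I.hyps(3)] by auto
  show ?case
    by (rule wf_pre_insert[OF ins_I.IH ins_I.hyps(2,6)])
      (use ends in \<open>auto dest: wf_pre_parentD[OF ins_I.IH]\<close>)
next
  case (ins_II M v v' z z' c wt)
  have ends: "fst z \<in> insert 0 (pV M)" "fst z' \<in> insert 0 (pV M)"
    using wf_pre_dashedD[OF ins_II.IH ins_II.hyps(3)] by auto
  show ?case
    by (rule wf_pre_insert[OF ins_II.IH ins_II.hyps(2,6)])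
      (use ends in \<open>auto dest: wf_pre_parentD[OF ins_II.IH]\<close>)
next
  case (ins_III M v v' z z' a c wt)
  have ends: "fst z \<in> insert 0 (pV M)" "fst z' \<in> insert 0 (pV M)"
    using wf_pre_dashedD[OF ins_III.IH ins_III.hyps(3)] by auto
  show ?case
    by (rule wf_pre_insert[OF ins_III.IH ins_III.hyps(2,7)])
      (use ends in \<open>auto dest: wf_pre_parentD[OF ins_III.IH]\<close>)
next
  case (ins_IIs M v v' z c wt)
  have ends: "fst (pP M z) \<in> insert 0 (pV M)"
    using wf_pre_parentD[OF ins_IIs.IH ins_IIs.hyps(3)] .
  show ?case
    by (rule wf_pre_insert[OF ins_IIs.IH ins_IIs.hyps(2,5)])
      (use ends in \<open>auto dest: wf_pre_parentD[OF ins_IIs.IH]\<close>)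
next
  case (ins_IIIs M v v' z a c wt)
  have ends: "fst (pP M z) \<in> insert 0 (pV M)"
    using wf_pre_parentD[OF ins_IIIs.IH ins_IIIs.hyps(3)] .
  show ?case
    by (rule wf_pre_insert[OF ins_IIIs.IH ins_IIIs.hyps(2,6)])
      (use ends in \<open>auto dest: wf_pre_parentD[OF ins_IIIs.IH]\<close>)
qed

section \<open>Extending admissible attributions along insertions\<close>

definition pre_conserves ::
  "pre \<Rightarrow> nat \<Rightarrow> (nat \<Rightarrow> nat) \<Rightarrow> (nat \<Rightarrow> nat) \<Rightarrow> (nat \<Rightarrow> nat) \<Rightarrow> bool" where
  "pre_conserves M r S j k \<longleftrightarrow>
     (\<forall>u\<in>pV M. mom r S j k (u, 1) = mom r S j k (pP M u)) \<and>
     (\<forall>d\<in>pD M. \<forall>e\<in>d. \<forall>e'\<in>d. mom r S j k e = mom r S j k e')"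

lemma pre_conserves_insert:
  assumes wf: "wf_pre M" and fr: "fresh2 M v v'" and cons: "pre_conserves M r S j k"
    and same: "\<And>u. u \<noteq> v \<Longrightarrow> u \<noteq> v' \<Longrightarrow> S' u = S u \<and> j' u = j u \<and> k' u = k u"
    and par_new: "\<And>u. u \<in> pV M \<union> {v, v'} \<Longrightarrow> u \<notin> pV M \<or> P u \<noteq> pP M u \<Longrightarrow>
      mom r S' j' k' (u, 1) = mom r S' j' k' (P u)"
    and dashed_new: "\<And>d e e'. d \<in> D \<Longrightarrow> d \<notin> pD M \<Longrightarrow> e \<in> d \<Longrightarrow> e' \<in> d \<Longrightarrow>
      mom r S' j' k' e = mom r S' j' k' e'"
  shows "pre_conserves \<lparr>pV = pV M \<union> {v, v'}, pP = P, pD = D, pW = W\<rparr> r S' j' k'"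
proof -
  have old: "mom r S' j' k' e = mom r S j k e" if "fst e \<in> insert 0 (pV M)" for e
    using that fr same[of "fst e"] by (intro mom_cong) (auto simp: fresh2_def)
  have "mom r S' j' k' (u, 1) = mom r S' j' k' (P u)" if "u \<in> pV M \<union> {v, v'}" for u
  proof (cases "u \<notin> pV M \<or> P u \<noteq> pP M u")
    case True
    then show ?thesis using par_new that by blast
  next
    case False
    then have u: "u \<in> pV M" and Pu: "P u = pP M u" by auto
    have "mom r S j k (u, 1) = mom r S j k (pP M u)"
      using cons u by (simp add: pre_conserves_def)
    then show ?thesis
      using old[of "(u, 1)"] old[OF wf_pre_parentD[OF wf u]] u Pu by simp
  qed
  moreover have "mom r S' j' k' e = mom r S' j' k' e'" if "d \<in> D" "e \<in> d" "e' \<in> d" for d e e'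
  proof (cases "d \<in> pD M")
    case True
    have "mom r S j k e = mom r S j k e'"
      using cons True that(2,3) unfolding pre_conserves_def by blast
    then show ?thesis
      using old[OF wf_pre_dashedD[OF wf True that(2)]] old[OF wf_pre_dashedD[OF wf True that(3)]]
      by simp
  next
    case False
    then show ?thesis using dashed_new that by blast
  qed
  ultimately show ?thesis unfolding pre_conserves_def pre.select_convs by blast
qed

text \<open>In each insertion rule the joining edges fix three slots of \<open>v'\<close>; as the four slot
  momenta of a vertex add up to \<open>2 s\<close>, the fourth slot carries \<open>m\<close>, the momentum of the edge
  into which the melon is inserted.\<close>

lemma pre_conserves_ins_I:
  assumes wf: "wf_pre M" and fr: "fresh2 M v v'" and xy: "{x, y} \<in> pD M"
    and cons: "pre_conserves M r S j k" and m: "m = mom r S j k x" "m \<le> s"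
    and "j' \<le> s" "k' \<le> s"
    and J: "\<And>i i'. (i, i') \<in> set [(2,2), (3,c), (4,7-c)] \<Longrightarrow>
      slot_mom s j' k' i' = slot_mom s m b i"
  shows "pre_conserves \<lparr>pV = pV M \<union> {v, v'}, pP = (pP M)(v := x, v' := y),
      pD = (pD M - {{x, y}}) \<union> {{(v,2),(v',2)}, {(v,3),(v',c)}, {(v,4),(v',7-c)}}, pW = W\<rparr>
      r (S(v := s, v' := s)) (j(v := m, v' := j')) (k(v := b, v' := k'))"
proof -
  have fr': "v \<noteq> v'" "v \<noteq> 0" "v' \<noteq> 0" "v \<notin> pV M" "v' \<notin> pV M"
    using fr by (auto simp: fresh2_def)
  have "fst x \<noteq> v \<and> fst x \<noteq> v'" "fst y \<noteq> v \<and> fst y \<noteq> v'"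
    using wf_pre_dashedD[OF wf xy, of x] wf_pre_dashedD[OF wf xy, of y] fr' by auto
  moreover have "mom r S j k y = m" using cons xy m by (simp add: pre_conserves_def)
  moreover have "j' = m" using J[of 2 2] \<open>j' \<le> s\<close> m by (simp add: slot_mom_def)
  ultimately show ?thesis
    using fr' J[of 3 c] J[of 4 "7-c"] m
    by (intro pre_conserves_insert[OF wf fr cons])
      (auto simp: mom_insert_old mom_vertex slot_mom_def)
qed

lemma pre_conserves_ins_II:
  assumes wf: "wf_pre M" and fr: "fresh2 M v v'" and zz': "{z, z'} \<in> pD M"
    and cons: "pre_conserves M r S j k" and m: "m = mom r S j k z" "m \<le> s"
    and "j' \<le> s" "k' \<le> s"
    and J: "\<And>i i'. (i, i') \<in> set [(2,1), (3,c), (4,7-c)] \<Longrightarrow>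
      slot_mom s j' k' i' = slot_mom s m b i"
  shows "pre_conserves \<lparr>pV = pV M \<union> {v, v'}, pP = (pP M)(v := z, v' := (v,2)),
      pD = (pD M - {{z, z'}}) \<union> {{(v',2), z'}, {(v,3),(v',c)}, {(v,4),(v',7-c)}}, pW = W\<rparr>
      r (S(v := s, v' := s)) (j(v := m, v' := j')) (k(v := b, v' := k'))"
proof -
  have fr': "v \<noteq> v'" "v \<noteq> 0" "v' \<noteq> 0" "v \<notin> pV M" "v' \<notin> pV M"
    using fr by (auto simp: fresh2_def)
  have "fst z \<noteq> v \<and> fst z \<noteq> v'" "fst z' \<noteq> v \<and> fst z' \<noteq> v'"
    using wf_pre_dashedD[OF wf zz', of z] wf_pre_dashedD[OF wf zz', of z'] fr' by auto
  moreover have "mom r S j k z' = m" using cons zz' m by (simp add: pre_conserves_def)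
  moreover have "j' = s - m" using J[of 2 1] by (simp add: slot_mom_def)
  ultimately show ?thesis
    using fr' J[of 3 c] J[of 4 "7-c"] m
    by (intro pre_conserves_insert[OF wf fr cons])
      (auto simp: mom_insert_old mom_vertex slot_mom_def)
qed

lemma pre_conserves_ins_III:
  assumes wf: "wf_pre M" and fr: "fresh2 M v v'" and zz': "{z, z'} \<in> pD M" and "c \<in> {3,4}"
    and cons: "pre_conserves M r S j k" and m: "m = mom r S j k z" "m \<le> s"
    and "j' \<le> s" "k' \<le> s"
    and J: "\<And>i i'. (i, i') \<in> set [(a,1), (2,c), (7-a,2)] \<Longrightarrow>
      slot_mom s j' k' i' = slot_mom s m b i"
  shows "pre_conserves \<lparr>pV = pV M \<union> {v, v'}, pP = (pP M)(v := z, v' := (v,a)),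
      pD = (pD M - {{z, z'}}) \<union> {{(v,2),(v',c)}, {(v,7-a),(v',2)}, {(v',7-c), z'}}, pW = W\<rparr>
      r (S(v := s, v' := s)) (j(v := m, v' := j')) (k(v := b, v' := k'))"
proof -
  have fr': "v \<noteq> v'" "v \<noteq> 0" "v' \<noteq> 0" "v \<notin> pV M" "v' \<notin> pV M"
    using fr by (auto simp: fresh2_def)
  have "fst z \<noteq> v \<and> fst z \<noteq> v'" "fst z' \<noteq> v \<and> fst z' \<noteq> v'"
    using wf_pre_dashedD[OF wf zz', of z] wf_pre_dashedD[OF wf zz', of z'] fr' by auto
  moreover have "mom r S j k z' = m" using cons zz' m by (simp add: pre_conserves_def)
  moreover have "slot_mom s j' k' (7 - c) = m"
    using J[of 2 c] \<open>c \<in> {3,4}\<close> \<open>k' \<le> s\<close> m by (auto simp: slot_mom_def)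
  ultimately show ?thesis
    using fr' J[of a 1] J[of 2 c] J[of "7-a" 2] m
    by (intro pre_conserves_insert[OF wf fr cons]) (auto simp: mom_insert_old mom_vertex)
qed

lemma pre_conserves_ins_IIs:
  assumes wf: "wf_pre M" and fr: "fresh2 M v v'" and z: "z \<in> pV M"
    and cons: "pre_conserves M r S j k" and m: "m = mom r S j k (pP M z)" "m \<le> s"
    and "j' \<le> s" "k' \<le> s"
    and J: "\<And>i i'. (i, i') \<in> set [(2,1), (3,c), (4,7-c)] \<Longrightarrow>
      slot_mom s j' k' i' = slot_mom s m b i"
  shows "pre_conserves \<lparr>pV = pV M \<union> {v, v'},
      pP = (pP M)(v := pP M z, v' := (v,2), z := (v',2)),
      pD = pD M \<union> {{(v,3),(v',c)}, {(v,4),(v',7-c)}}, pW = W\<rparr>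
      r (S(v := s, v' := s)) (j(v := m, v' := j')) (k(v := b, v' := k'))"
proof -
  have fr': "v \<noteq> v'" "v \<noteq> 0" "v' \<noteq> 0" "v \<notin> pV M" "v' \<notin> pV M"
    using fr by (auto simp: fresh2_def)
  have "fst (pP M z) \<noteq> v \<and> fst (pP M z) \<noteq> v'" "z \<noteq> v \<and> z \<noteq> v'"
    using wf_pre_parentD[OF wf z] z fr' by auto
  moreover have "mom r S j k (z, 1) = m" using cons z m by (simp add: pre_conserves_def)
  moreover have "j' = s - m" using J[of 2 1] by (simp add: slot_mom_def)
  ultimately show ?thesis
    using fr' J[of 3 c] J[of 4 "7-c"] m
    by (intro pre_conserves_insert[OF wf fr cons])
      (auto simp: mom_insert_old mom_vertex slot_mom_def)
qed

lemma pre_conserves_ins_IIIs: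
  assumes wf: "wf_pre M" and fr: "fresh2 M v v'" and z: "z \<in> pV M" and "c \<in> {3,4}"
    and cons: "pre_conserves M r S j k" and m: "m = mom r S j k (pP M z)" "m \<le> s"
    and "j' \<le> s" "k' \<le> s"
    and J: "\<And>i i'. (i, i') \<in> set [(a,1), (2,7-c), (7-a,2)] \<Longrightarrow>
      slot_mom s j' k' i' = slot_mom s m b i"
  shows "pre_conserves \<lparr>pV = pV M \<union> {v, v'},
      pP = (pP M)(v := pP M z, v' := (v,a), z := (v',c)),
      pD = pD M \<union> {{(v,2),(v',7-c)}, {(v,7-a),(v',2)}}, pW = W\<rparr>
      r (S(v := s, v' := s)) (j(v := m, v' := j')) (k(v := b, v' := k'))"
proof -
  have fr': "v \<noteq> v'" "v \<noteq> 0" "v' \<noteq> 0" "v \<notin> pV M" "v' \<notin> pV M"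
    using fr by (auto simp: fresh2_def)
  have "fst (pP M z) \<noteq> v \<and> fst (pP M z) \<noteq> v'" "z \<noteq> v \<and> z \<noteq> v'"
    using wf_pre_parentD[OF wf z] z fr' by auto
  moreover have "mom r S j k (z, 1) = m" using cons z m by (simp add: pre_conserves_def)
  moreover have "slot_mom s j' k' c = m"
    using J[of 2 "7-c"] \<open>c \<in> {3,4}\<close> \<open>k' \<le> s\<close> m by (auto simp: slot_mom_def)
  ultimately show ?thesis
    using fr' J[of a 1] J[of 2 "7-c"] J[of "7-a" 2] m
    by (intro pre_conserves_insert[OF wf fr cons]) (auto simp: mom_insert_old mom_vertex)
qed

text \<open>Attributions are required to vanish off the vertex set, so that relabelling them by heap
  labels is injective.\<close>

definition pre_admissible :: "pre \<Rightarrow> nat \<Rightarrow> attribution \<Rightarrow> bool" where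
  "pre_admissible M r A \<longleftrightarrow> (case A of (S, j, k) \<Rightarrow>
     (\<forall>u. u \<notin> pV M \<longrightarrow> S u = 0 \<and> j u = 0 \<and> k u = 0) \<and>
     (\<forall>u. j u \<le> S u \<and> k u \<le> S u) \<and> pre_conserves M r S j k) \<and>
     (\<forall>w\<in>pW M. wavy_ok A w)"

definition param_family :: "pre \<Rightarrow> nat \<Rightarrow> (nat list \<Rightarrow> attribution) \<Rightarrow> bool" where
  "param_family M r F \<longleftrightarrow> inj_on F {xs. length xs = card (pV M)} \<and>
     (\<forall>xs. length xs = card (pV M) \<longrightarrow>
        pre_admissible M r (F xs) \<and> (\<forall>u. fst (F xs) u \<le> r + sum_list xs))"

lemma pre_admissible_insert:
  assumes wf: "wf_pre M" and fr: "fresh2 M v v'" and adm: "pre_admissible M r (S, j, k)"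
    and lw: "leading_wavy v v' J wt" and J: "set J \<subseteq> {1,2,3,4} \<times> {1,2,3,4}"
    and V': "pV M' = pV M \<union> {v, v'}" and W': "pW M' = pW M \<union> {wt}"
    and "m \<le> s" "b \<le> s"
    and cons: "\<And>j' k'. j' \<le> s \<Longrightarrow> k' \<le> s \<Longrightarrow>
      (\<And>i i'. (i, i') \<in> set J \<Longrightarrow> slot_mom s j' k' i' = slot_mom s m b i) \<Longrightarrow>
      pre_conserves M' r (S(v := s, v' := s)) (j(v := m, v' := j')) (k(v := b, v' := k'))"
  shows "\<exists>j' k'. pre_admissible M' r (S(v := s, v' := s), j(v := m, v' := j'), k(v := b, v' := k'))"
proof -
  have fr': "v \<noteq> v'" "v \<notin> pV M" "v' \<notin> pV M" using fr by (auto simp: fresh2_def)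
  obtain j' k' where "j' \<le> s" "k' \<le> s"
    and slots: "\<And>i i'. (i, i') \<in> set J \<Longrightarrow> slot_mom s j' k' i' = slot_mom s m b i"
    and new: "wavy_ok (S(v := s, v' := s), j(v := m, v' := j'), k(v := b, v' := k')) wt"
    using leading_wavy_partner[OF lw fr'(1) J \<open>m \<le> s\<close> \<open>b \<le> s\<close>] by blast
  have "wavy_ok (S(v := s, v' := s), j(v := m, v' := j'), k(v := b, v' := k')) w"
    if "w \<in> pW M" for w
  proof -
    obtain a a' t where w: "w = (a, a', t)" using prod_cases3 by blast
    have "a \<in> pV M" "a' \<in> pV M" using wf_pre_wavyD[OF wf] that w by auto
    then show ?thesis using adm that w fr' by (auto simp: pre_admissible_def wavy_ok_def)
  qed
  then have "pre_admissible M' r (S(v := s, v' := s), j(v := m, v' := j'), k(v := b, v' := k'))"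
    using adm cons[OF \<open>j' \<le> s\<close> \<open>k' \<le> s\<close> slots] new V' W' \<open>j' \<le> s\<close> \<open>k' \<le> s\<close>
      \<open>m \<le> s\<close> \<open>b \<le> s\<close>
    by (auto simp: pre_admissible_def)
  then show ?thesis by blast
qed

lemma param_family_step:
  assumes fam: "param_family M r F" and card': "card (pV M') = Suc (Suc (card (pV M)))"
    and ext_adm: "\<And>S j k a b. pre_admissible M r (S, j, k) \<Longrightarrow>
      pre_admissible M' r (G (S, j, k) a b)"
    and ext_bound: "\<And>S j k a b B u. pre_admissible M r (S, j, k) \<Longrightarrow> (\<And>u. S u \<le> B) \<Longrightarrow>
      r \<le> B \<Longrightarrow> fst (G (S, j, k) a b) u \<le> a + b + B"
    and ext_inj: "\<And>A A' a b a' b'. pre_admissible M r A \<Longrightarrow> pre_admissible M r A' \<Longrightarrow>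
      G A a b = G A' a' b' \<Longrightarrow> A = A' \<and> a = a' \<and> b = b'"
  shows "param_family M' r (\<lambda>xs. G (F (tl (tl xs))) (hd xs) (hd (tl xs)))"
  unfolding param_family_def card'
proof
  have fam_ys: "pre_admissible M r (F ys)" "\<And>u. fst (F ys) u \<le> r + sum_list ys"
    if "length ys = card (pV M)" for ys
    using fam that unfolding param_family_def by blast+
  show "inj_on (\<lambda>xs. G (F (tl (tl xs))) (hd xs) (hd (tl xs)))
      {xs. length xs = Suc (Suc (card (pV M)))}"
  proof (rule inj_onI)
    fix xs xs' assume "xs \<in> {xs. length xs = Suc (Suc (card (pV M)))}"
      "xs' \<in> {xs. length xs = Suc (Suc (card (pV M)))}"
      and eq: "G (F (tl (tl xs))) (hd xs) (hd (tl xs)) = G (F (tl (tl xs'))) (hd xs') (hd (tl xs'))"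
    then obtain a b ys a' b' ys' where xs: "xs = a # b # ys" "xs' = a' # b' # ys'"
      and len: "length ys = card (pV M)" "length ys' = card (pV M)"
      by (auto simp: length_Suc_conv)
    have "F ys = F ys' \<and> a = a' \<and> b = b'"
      by (rule ext_inj[OF fam_ys(1)[OF len(1)] fam_ys(1)[OF len(2)]]) (use eq xs in simp)
    moreover have "inj_on F {xs. length xs = card (pV M)}"
      using fam by (simp add: param_family_def)
    ultimately show "xs = xs'" using xs len by (auto dest: inj_onD)
  qed
  show "\<forall>xs. length xs = Suc (Suc (card (pV M))) \<longrightarrow>
      pre_admissible M' r (G (F (tl (tl xs))) (hd xs) (hd (tl xs))) \<and>
      (\<forall>u. fst (G (F (tl (tl xs))) (hd xs) (hd (tl xs))) u \<le> r + sum_list xs)"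
  proof (intro allI impI)
    fix xs :: "nat list" assume "length xs = Suc (Suc (card (pV M)))"
    then obtain a b ys where xs: "xs = a # b # ys" and len: "length ys = card (pV M)"
      by (auto simp: length_Suc_conv)
    obtain S j k where F: "F ys = (S, j, k)" by (metis prod_cases3)
    have adm: "pre_admissible M r (S, j, k)" using fam_ys(1)[OF len] F by simp
    have "S u \<le> r + sum_list ys" for u using fam_ys(2)[OF len, of u] F by simp
    then have "fst (G (S, j, k) a b) u \<le> r + sum_list xs" for u
      using ext_bound[OF adm, of "r + sum_list ys" a b u] xs by simp
    then show "pre_admissible M' r (G (F (tl (tl xs))) (hd xs) (hd (tl xs))) \<and>
        (\<forall>u. fst (G (F (tl (tl xs))) (hd xs) (hd (tl xs))) u \<le> r + sum_list xs)"
      using ext_adm[OF adm] F xs by simp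
  qed
qed

lemma fun_upd2_cancel:
  assumes "f(v := x, v' := y) = g(v := x', v' := y')" "f v = 0" "f v' = 0" "g v = 0" "g v' = 0"
  shows "f = g"
proof
  fix u show "f u = g u"
    using fun_cong[OF assms(1), of u] assms(2-5) by (cases "u = v \<or> u = v'") auto
qed

lemma insert_attribution_inj:
  fixes S j k S2 j2 k2 :: "nat \<Rightarrow> nat"
  assumes eq: "(S(v := m + a + b, v' := m + a + b), j(v := m, v' := j'), k(v := b, v' := k')) =
      (S2(v := m2 + a2 + b2, v' := m2 + a2 + b2), j2(v := m2, v' := j2'), k2(v := b2, v' := k2'))"
    and vv': "v \<noteq> v'"
    and zero: "\<And>u. u \<in> {v, v'} \<Longrightarrow> S u = 0 \<and> j u = 0 \<and> k u = 0 \<and> S2 u = 0 \<and> j2 u = 0 \<and> k2 u = 0"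
  shows "S = S2 \<and> j = j2 \<and> k = k2 \<and> a = a2 \<and> b = b2"
proof -
  have eq_S: "S(v := m + a + b, v' := m + a + b) = S2(v := m2 + a2 + b2, v' := m2 + a2 + b2)"
    and eq_j: "j(v := m, v' := j') = j2(v := m2, v' := j2')"
    and eq_k: "k(v := b, v' := k') = k2(v := b2, v' := k2')"
    using eq unfolding prod.inject by blast+
  have fun_eqs: "S = S2" "j = j2" "k = k2"
    by (rule fun_upd2_cancel[OF eq_S] fun_upd2_cancel[OF eq_j] fun_upd2_cancel[OF eq_k];
        use zero in auto)+
  have "m = m2" "b = b2" "m + a + b = m2 + a2 + b2"
    using fun_cong[OF eq_j, of v] fun_cong[OF eq_k, of v] fun_cong[OF eq_S, of v] vv' by simp_all
  with fun_eqs show ?thesis by simp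
qed

lemma param_family_extend:
  assumes fam: "param_family M r F" and fin: "finite (pV M)"
    and fr: "v \<noteq> v'" "v \<notin> pV M" "v' \<notin> pV M" and V': "pV M' = pV M \<union> {v, v'}"
    and ext: "\<And>S j k a b. pre_admissible M r (S, j, k) \<Longrightarrow> \<exists>j' k'.
      pre_admissible M' r (G (S, j, k) a b) \<and>
      G (S, j, k) a b = (S(v := mom r S j k e + a + b, v' := mom r S j k e + a + b),
        j(v := mom r S j k e, v' := j'), k(v := b, v' := k'))"
  shows "\<exists>F'. param_family M' r F'"
proof -
  have ext_bound: "fst (G (S, j, k) a b) u \<le> a + b + B"
    if adm: "pre_admissible M r (S, j, k)" and bound: "\<And>u. S u \<le> B" "r \<le> B" for S j k a b B u
  proof -
    have "j (fst e) \<le> S (fst e)" "k (fst e) \<le> S (fst e)"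
      using adm by (simp_all add: pre_admissible_def)
    then have "mom r S j k e \<le> B"
      using mom_le_max bound(1)[of "fst e"] bound(2) by (metis max.bounded_iff order_trans)
    then show ?thesis using ext[OF adm, of a b] bound(1)[of u] by auto
  qed
  have ext_inj: "A = A' \<and> a = a' \<and> b = b'"
    if adm: "pre_admissible M r A" "pre_admissible M r A'" and eq: "G A a b = G A' a' b'"
    for A A' a b a' b'
  proof -
    obtain S j k S2 j2 k2 where A: "A = (S, j, k)" "A' = (S2, j2, k2)" by (metis prod_cases3)
    obtain j1 k1 where E1: "G (S, j, k) a b =
        (S(v := mom r S j k e + a + b, v' := mom r S j k e + a + b),
        j(v := mom r S j k e, v' := j1), k(v := b, v' := k1))"
      using ext[OF adm(1)[unfolded A(1)], of a b] by blast
    obtain j2' k2' where E2: "G (S2, j2, k2) a' b' =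
        (S2(v := mom r S2 j2 k2 e + a' + b', v' := mom r S2 j2 k2 e + a' + b'),
        j2(v := mom r S2 j2 k2 e, v' := j2'), k2(v := b', v' := k2'))"
      using ext[OF adm(2)[unfolded A(2)], of a' b'] by blast
    have "S u = 0 \<and> j u = 0 \<and> k u = 0 \<and> S2 u = 0 \<and> j2 u = 0 \<and> k2 u = 0" if "u \<in> {v, v'}" for u
      using adm A fr that by (auto simp: pre_admissible_def)
    then show ?thesis using insert_attribution_inj[OF eq[unfolded A E1 E2] fr(1)] A by simp
  qed
  have ext_adm: "pre_admissible M' r (G (S, j, k) a b)" if "pre_admissible M r (S, j, k)"
    for S j k a b
    using ext[OF that] by blast
  have "card (pV M') = Suc (Suc (card (pV M)))" using fin fr V' by simp
  from param_family_step[where G = G, OF fam this ext_adm ext_bound ext_inj] show ?thesis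
    by blast
qed

lemma param_family_insert:
  assumes wf: "wf_pre M" and fam: "param_family M r F" and fr: "fresh2 M v v'"
    and lw: "leading_wavy v v' J wt"
    and cons: "\<And>S j k m s b j' k'. pre_conserves M r S j k \<Longrightarrow> m = mom r S j k e \<Longrightarrow> m \<le> s \<Longrightarrow>
      j' \<le> s \<Longrightarrow> k' \<le> s \<Longrightarrow>
      (\<And>i i'. (i, i') \<in> set J \<Longrightarrow> slot_mom s j' k' i' = slot_mom s m b i) \<Longrightarrow>
      pre_conserves M' r (S(v := s, v' := s)) (j(v := m, v' := j')) (k(v := b, v' := k'))"
    and J: "set J \<subseteq> {1,2,3,4} \<times> {1,2,3,4}"
    and V': "pV M' = pV M \<union> {v, v'}" and W': "pW M' = pW M \<union> {wt}"
  shows "\<exists>F'. param_family M' r F'"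
proof -
  define G where "G A a b = (case A of (S, j, k) \<Rightarrow>
    SOME A'. \<exists>j' k'. pre_admissible M' r A' \<and>
      A' = (S(v := mom r S j k e + a + b, v' := mom r S j k e + a + b),
        j(v := mom r S j k e, v' := j'), k(v := b, v' := k')))" for A a b
  have "\<exists>j' k'. pre_admissible M' r (G (S, j, k) a b) \<and>
      G (S, j, k) a b = (S(v := mom r S j k e + a + b, v' := mom r S j k e + a + b),
        j(v := mom r S j k e, v' := j'), k(v := b, v' := k'))"
    if adm: "pre_admissible M r (S, j, k)" for S j k a b
  proof -
    define m where "m = mom r S j k e"
    define s where "s = m + a + b"
    have "pre_conserves M r S j k" using adm by (simp add: pre_admissible_def)
    then have "pre_conserves M' r (S(v := s, v' := s)) (j(v := m, v' := j')) (k(v := b, v' := k'))"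
      if "j' \<le> s" "k' \<le> s"
        "\<And>i i'. (i, i') \<in> set J \<Longrightarrow> slot_mom s j' k' i' = slot_mom s m b i" for j' k'
      using cons[OF _ m_def _ that] s_def by simp
    then obtain j' k' where new:
      "pre_admissible M' r (S(v := s, v' := s), j(v := m, v' := j'), k(v := b, v' := k'))"
      using pre_admissible_insert[OF wf fr adm lw J V' W'] s_def by fastforce
    show ?thesis
      unfolding G_def prod.case m_def[symmetric] s_def[symmetric]
      by (rule someI_ex) (use new in blast)
  qed
  moreover have "finite (pV M)" using wf by (simp add: wf_pre_def)
  moreover have "v \<noteq> v'" "v \<notin> pV M" "v' \<notin> pV M" using fr by (auto simp: fresh2_def)
  ultimately show ?thesis by (intro param_family_extend[where G = G and e = e, OF fam _ _ _ _ V'])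
qed

lemma melonic_pre_param_family: "M \<in> melonic_pre \<Longrightarrow> \<exists>F. param_family M r F"
proof (induction rule: melonic_pre.induct)
  case trivial
  have "param_family \<lparr>pV = {}, pP = \<lambda>_. (0, 0), pD = {{(0, 1), (0, 2)}}, pW = {}\<rparr> r
      (\<lambda>_. (\<lambda>_. 0, \<lambda>_. 0, \<lambda>_. 0))"
    by (simp add: param_family_def pre_admissible_def pre_conserves_def mom_root inj_on_def)
  then show ?case by blast
next
  case (ins_I M v v' x y c wt)
  note wf = wf_pre_melonic[OF ins_I.hyps(1)]
  obtain F where "param_family M r F" using ins_I.IH by blast
  then show ?case
    by (rule param_family_insert[OF wf _ ins_I.hyps(2,6)
          pre_conserves_ins_I[OF wf ins_I.hyps(2,3)]])
      (use ins_I.hyps(5) in auto)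
next
  case (ins_II M v v' z z' c wt)
  note wf = wf_pre_melonic[OF ins_II.hyps(1)]
  obtain F where "param_family M r F" using ins_II.IH by blast
  then show ?case
    by (rule param_family_insert[OF wf _ ins_II.hyps(2,6)
          pre_conserves_ins_II[OF wf ins_II.hyps(2,3)]])
      (use ins_II.hyps(5) in auto)
next
  case (ins_III M v v' z z' a c wt)
  note wf = wf_pre_melonic[OF ins_III.hyps(1)]
  obtain F where "param_family M r F" using ins_III.IH by blast
  then show ?case
    by (rule param_family_insert[OF wf _ ins_III.hyps(2,7)
          pre_conserves_ins_III[OF wf ins_III.hyps(2,3,6)]])
      (use ins_III.hyps(5,6) in auto)
next
  case (ins_IIs M v v' z c wt)
  note wf = wf_pre_melonic[OF ins_IIs.hyps(1)]
  obtain F where "param_family M r F" using ins_IIs.IH by blast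
  then show ?case
    by (rule param_family_insert[OF wf _ ins_IIs.hyps(2,5)
          pre_conserves_ins_IIs[OF wf ins_IIs.hyps(2,3)]])
      (use ins_IIs.hyps(4) in auto)
next
  case (ins_IIIs M v v' z a c wt)
  note wf = wf_pre_melonic[OF ins_IIIs.hyps(1)]
  obtain F where "param_family M r F" using ins_IIIs.IH by blast
  then show ?case
    by (rule param_family_insert[OF wf _ ins_IIIs.hyps(2,6)
          pre_conserves_ins_IIIs[OF wf ins_IIIs.hyps(2,3,5)]])
      (use ins_IIIs.hyps(4,5) in auto)
qed

section \<open>Relabelling by heap labels\<close>

locale melonic_labelling =
  fixes n :: nat and G :: graph and M :: pre and \<sigma> :: "nat \<Rightarrow> nat"
  assumes wf: "wf_pre M"
    and root: "\<sigma> 0 = 0"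
    and bij: "bij_betw \<sigma> (pV M) {1..n}"
    and par_eq: "\<And>w. w \<in> pV M \<Longrightarrow> par G (\<sigma> w) = mape \<sigma> (pP M w)"
    and dashed_eq: "dashed n G = (\<lambda>d. mape \<sigma> ` d) ` pD M"
    and wavy_eq: "wv G = (\<lambda>(a, b, t). (\<sigma> a, \<sigma> b, t)) ` pW M"
begin

definition relabel :: "(nat \<Rightarrow> nat) \<Rightarrow> nat \<Rightarrow> nat" where
  "relabel f u = (if u \<in> {1..n} then f (inv_into (pV M) \<sigma> u) else 0)"

lemma label_range: "w \<in> pV M \<Longrightarrow> \<sigma> w \<in> {1..n}"
  using bij by (auto simp: bij_betw_def)

lemma label_surj: "u \<in> {1..n} \<Longrightarrow> \<exists>w\<in>pV M. u = \<sigma> w"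
  using bij by (auto simp: bij_betw_def)

lemma relabel_label: "w \<in> pV M \<Longrightarrow> relabel f (\<sigma> w) = f w"
  using bij label_range by (simp add: relabel_def bij_betw_def)

lemma relabel_inj:
  assumes "\<And>u. u \<notin> pV M \<Longrightarrow> f u = 0" "\<And>u. u \<notin> pV M \<Longrightarrow> g u = 0" "relabel f = relabel g"
  shows "f = g"
proof
  fix u show "f u = g u"
    using assms relabel_label[of u f] relabel_label[of u g] by (cases "u \<in> pV M") metis+
qed

lemma mom_relabel:
  assumes "fst e \<in> insert 0 (pV M)"
  shows "mom r (relabel S) (relabel j) (relabel k) (mape \<sigma> e) = mom r S j k e"
proof (cases e)
  case (Pair u i)
  show ?thesis
  proof (cases "u = 0")
    case True
    then show ?thesis using Pair root by (simp add: mape_def mom_root)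
  next
    case False
    then have "u \<in> pV M" using assms Pair by simp
    moreover have "\<sigma> u \<noteq> 0" using label_range[OF \<open>u \<in> pV M\<close>] by simp
    ultimately show ?thesis using Pair False by (simp add: mape_def mom_vertex relabel_label)
  qed
qed

lemma parent_mom_relabel:
  assumes cons: "pre_conserves M r S j k" and u: "u \<in> {1..n}"
  shows "mom r (relabel S) (relabel j) (relabel k) (u, 1) =
    mom r (relabel S) (relabel j) (relabel k) (par G u)"
proof -
  obtain w where w: "w \<in> pV M" "u = \<sigma> w" using label_surj[OF u] by blast
  have "mom r (relabel S) (relabel j) (relabel k) (u, 1) = mom r S j k (w, 1)"
    using mom_relabel[of "(w, 1)"] w by (simp add: mape_def)
  also have "\<dots> = mom r S j k (pP M w)" using cons w(1) by (simp add: pre_conserves_def)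
  also have "\<dots> = mom r (relabel S) (relabel j) (relabel k) (par G u)"
    using mom_relabel[OF wf_pre_parentD[OF wf w(1)]] par_eq[OF w(1)] w(2) by simp
  finally show ?thesis .
qed

lemma dashed_mom_relabel:
  assumes cons: "pre_conserves M r S j k" and x: "x \<in> leaves n G"
  shows "mom r (relabel S) (relabel j) (relabel k) x =
    mom r (relabel S) (relabel j) (relabel k) (wd G x)"
proof -
  have "{x, wd G x} \<in> dashed n G" using x unfolding dashed_def by blast
  then obtain d where d: "d \<in> pD M" "{x, wd G x} = mape \<sigma> ` d" using dashed_eq by auto
  then obtain e e' where e: "e \<in> d" "x = mape \<sigma> e" and e': "e' \<in> d" "wd G x = mape \<sigma> e'"
    by (metis imageE insertI1 insertI2 singletonI)
  have "mom r S j k e = mom r S j k e'"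
    using cons d(1) e(1) e'(1) unfolding pre_conserves_def by blast
  then show ?thesis
    using e e' mom_relabel[OF wf_pre_dashedD[OF wf d(1) e(1)]]
      mom_relabel[OF wf_pre_dashedD[OF wf d(1) e'(1)]]
    by simp
qed

lemma wavy_relabel:
  assumes wavy: "\<And>w. w \<in> pW M \<Longrightarrow> wavy_ok (S, j, k) w" and abt: "(a, b, t) \<in> wv G"
  shows "prop_ok t (relabel S a, relabel j a, relabel k a) (relabel S b, relabel j b, relabel k b)"
proof -
  obtain a' b' where w: "(a', b', t) \<in> pW M" and ab: "a = \<sigma> a'" "b = \<sigma> b'"
    using abt wavy_eq by auto
  then have "a' \<in> pV M" "b' \<in> pV M" using wf_pre_wavyD[OF wf] by blast+
  then show ?thesis using wavy[OF w] ab by (simp add: wavy_ok_def relabel_label)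
qed

lemma admissible_relabel:
  assumes adm: "pre_admissible M r (S, j, k)"
  shows "admissible n r G (relabel S, relabel j, relabel k)"
proof -
  have cons: "pre_conserves M r S j k" and bounded: "\<And>u. j u \<le> S u \<and> k u \<le> S u"
    and wavy: "\<And>w. w \<in> pW M \<Longrightarrow> wavy_ok (S, j, k) w"
    using adm by (auto simp: pre_admissible_def)
  have "\<forall>u. u \<notin> {1..n} \<longrightarrow> relabel S u = 0 \<and> relabel j u = 0 \<and> relabel k u = 0"
    by (simp add: relabel_def)
  moreover have "\<forall>u\<in>{1..n}. relabel j u \<le> relabel S u \<and> relabel k u \<le> relabel S u"
    using bounded by (simp add: relabel_def)
  ultimately show ?thesis
    using parent_mom_relabel[OF cons] dashed_mom_relabel[OF cons] wavy_relabel[OF wavy]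
    unfolding admissible_def prod.case by blast
qed

lemma admissible_family:
  assumes fam: "param_family M r F"
  shows "\<exists>F'. inj_on F' {xs. length xs = n} \<and>
    (\<forall>xs. length xs = n \<longrightarrow> admissible n r G (F' xs) \<and> (\<forall>u. fst (F' xs) u \<le> r + sum_list xs))"
proof -
  define F' where "F' xs = (case F xs of (S, j, k) \<Rightarrow> (relabel S, relabel j, relabel k))" for xs
  have n: "card (pV M) = n" using bij_betw_same_card[OF bij] by simp
  have adm: "pre_admissible M r (F xs)" and bound: "\<And>u. fst (F xs) u \<le> r + sum_list xs"
    if "length xs = n" for xs
    using fam that n by (auto simp: param_family_def)
  have inj: "inj_on F {xs. length xs = n}" using fam n by (simp add: param_family_def)
  have "inj_on F' {xs. length xs = n}"
  proof (rule inj_onI)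
    fix xs ys assume xs: "xs \<in> {xs. length xs = n}" and ys: "ys \<in> {xs. length xs = n}"
      and eq: "F' xs = F' ys"
    obtain S j k S2 j2 k2 where F: "F xs = (S, j, k)" "F ys = (S2, j2, k2)" by (metis prod_cases3)
    have zero: "\<forall>u. u \<notin> pV M \<longrightarrow> S u = 0 \<and> j u = 0 \<and> k u = 0"
        "\<forall>u. u \<notin> pV M \<longrightarrow> S2 u = 0 \<and> j2 u = 0 \<and> k2 u = 0"
      using adm[of xs] adm[of ys] xs ys F by (auto simp: pre_admissible_def)
    have "relabel S = relabel S2" "relabel j = relabel j2" "relabel k = relabel k2"
      using eq by (simp_all add: F'_def F)
    then have "S = S2" "j = j2" "k = k2" using zero by (blast intro: relabel_inj)+
    then show "xs = ys" using inj_onD[OF inj _ xs ys] F by simp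
  qed
  moreover have "admissible n r G (F' xs) \<and> (\<forall>u. fst (F' xs) u \<le> r + sum_list xs)"
    if "length xs = n" for xs
  proof -
    obtain S j k where F: "F xs = (S, j, k)" by (metis prod_cases3)
    have "relabel S u \<le> r + sum_list xs" for u
      using bound[OF that, of "inv_into (pV M) \<sigma> u"] F by (simp add: relabel_def)
    then show ?thesis
      using admissible_relabel adm[OF that] F by (simp add: F'_def)
  qed
  ultimately show ?thesis by blast
qed

end

lemma melonic_admissible_family:
  assumes "melonic n G"
  shows "\<exists>F. inj_on F {xs. length xs = n} \<and>
    (\<forall>xs. length xs = n \<longrightarrow> admissible n r G (F xs) \<and> (\<forall>u. fst (F xs) u \<le> r + sum_list xs))"
proof -
  obtain M \<sigma> where H: "M \<in> melonic_pre \<and> \<sigma> 0 = 0 \<and> bij_betw \<sigma> (pV M) {1..n} \<and>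
      (\<forall>v\<in>pV M. par G (\<sigma> v) = mape \<sigma> (pP M v)) \<and> dashed n G = (\<lambda>d. mape \<sigma> ` d) ` pD M \<and>
      wv G = (\<lambda>(a, b, t). (\<sigma> a, \<sigma> b, t)) ` pW M"
    using conjunct2[OF assms[unfolded melonic_def]] by (elim exE) (rule that)
  then have M: "M \<in> melonic_pre" by blast
  interpret melonic_labelling n G M \<sigma>
    using H wf_pre_melonic[OF M] by unfold_locales blast+
  obtain F where "param_family M r F" using melonic_pre_param_family[OF M] by blast
  then show ?thesis by (rule admissible_family)
qed

section \<open>The amplitude bound\<close>

lemma card_leaves_le:
  assumes "is_graph n G"
  shows "finite (leaves n G)" "card (leaves n G) \<le> n + 1"
proof -
  have par: "par G ` {1..n} \<subseteq> child_ends n" and inj: "inj_on (par G) {1..n}"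
    and bij: "bij_betw (wd G) (leaves n G) (antileaves n G)"
    using assms unfolding is_graph_def by auto
  have ends: "child_ends n = {(0, 1), (0, 2)} \<union> {1..n} \<times> {2, 3, 4}"
    unfolding child_ends_def by auto
  have fin: "finite (child_ends n)" and card_ends: "card (child_ends n) \<le> 3 * n + 2"
    using card_Un_le[of "{(0::nat, 1::nat), (0, 2)}" "{1..n} \<times> {2::nat, 3, 4}"]
    by (simp_all add: ends card_cartesian_product)
  have "card (leaf_ends n G) = card (child_ends n) - n"
    unfolding leaf_ends_def
    using card_Diff_subset[OF finite_subset[OF par fin] par] card_image[OF inj] by simp
  then have card_leaf_ends: "card (leaf_ends n G) \<le> 2 * n + 2" using card_ends by simp
  have fin_leaf_ends: "finite (leaf_ends n G)" using fin by (simp add: leaf_ends_def)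
  have sub: "leaves n G \<union> antileaves n G \<subseteq> leaf_ends n G" "leaves n G \<inter> antileaves n G = {}"
    unfolding leaves_def antileaves_def by auto
  show fin_leaves: "finite (leaves n G)" using finite_subset[OF _ fin_leaf_ends] sub(1) by blast
  have fin_anti: "finite (antileaves n G)" using finite_subset[OF _ fin_leaf_ends] sub(1) by blast
  have "2 * card (leaves n G) = card (leaves n G \<union> antileaves n G)"
    using card_Un_disjoint[OF fin_leaves fin_anti sub(2)] bij_betw_same_card[OF bij] by simp
  also have "\<dots> \<le> card (leaf_ends n G)" by (rule card_mono[OF fin_leaf_ends sub(1)])
  finally show "card (leaves n G) \<le> n + 1" using card_leaf_ends by simp
qed

lemma admissible_weight_ge:
  fixes p :: real
  assumes "is_graph n G" "admissible n r G (S, j, k)" "\<And>u. S u \<le> r + s" "0 \<le> p" "p \<le> 1"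
  shows "p ^ ((n + 1) * r) * (p ^ (n + 1)) ^ s \<le> (\<Prod>x\<in>leaves n G. p ^ mom r S j k x)"
proof -
  have "j u \<le> S u \<and> k u \<le> S u" for u
    using assms(2) by (cases "u \<in> {1..n}") (auto simp: admissible_def)
  then have "mom r S j k x \<le> r + s" for x
    using mom_le_max[of j x S k r] assms(3) by (meson max.bounded_iff order_trans le_add1)
  then have "(p ^ (r + s)) ^ (n + 1) \<le> (\<Prod>x\<in>leaves n G. p ^ mom r S j k x)"
    by (intro prod_power_ge[OF card_leaves_le[OF assms(1)] assms(4,5)])
  then show ?thesis by (simp add: power_mult[symmetric] power_add[symmetric] algebra_simps)
qed

theorem lemma7:
  fixes p :: real and r n :: nat and G :: graph
  assumes "0 < p" and "p < 1" and "even n"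
    and "is_graph n G" and "melonic n G"
  shows "ennreal (p ^ ((2 * n + 1) * r) / (2 * real n + 1) ^ n) \<le> amplitude p n r G"
proof -
  obtain F where inj: "inj_on F {xs. length xs = n}"
    and adm: "\<And>xs. length xs = n \<Longrightarrow> admissible n r G (F xs)"
    and bound: "\<And>xs u. length xs = n \<Longrightarrow> fst (F xs) u \<le> r + sum_list xs"
    using melonic_admissible_family[OF assms(5), of r] by blast
  define weight where
    "weight A = (case A of (S, j, k) \<Rightarrow> ennreal (\<Prod>x\<in>leaves n G. p ^ mom r S j k x))"
    for A :: attribution
  define q where "q = p ^ (n + 1)"
  have q: "0 \<le> q" "q < 1"
    using assms(1,2) power_strict_decreasing[of 0 "n + 1" p] by (simp_all add: q_def)
  have "ennreal (p ^ ((n + 1) * r) * q ^ sum_list xs) \<le> weight (F xs)" if "length xs = n" for xs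
    using admissible_weight_ge[OF assms(4) _ bound[OF that]] adm[OF that] assms(1,2)
    by (auto simp: weight_def q_def ennreal_leI split: prod.split)
  then have "ennreal (p ^ ((n + 1) * r) * (1 / (1 - q)) ^ n) \<le>
      (\<Sum>\<^sub>\<infinity>A\<in>{A. admissible n r G A}. weight A)"
    by (intro geometric_family_le_infsum[OF inj]) (use adm q assms(1) in auto)
  then have "ennreal (1 / (1 / (1 - p)) ^ n) * ennreal (p ^ ((n + 1) * r) * (1 / (1 - q)) ^ n)
      \<le> amplitude p n r G"
    unfolding amplitude_def weight_def by (rule mult_left_mono) simp
  moreover have "ennreal (p ^ ((2 * n + 1) * r) / (2 * real n + 1) ^ n) \<le>
      ennreal (1 / (1 / (1 - p)) ^ n) * ennreal (p ^ ((n + 1) * r) * (1 / (1 - q)) ^ n)"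
    using geometric_factor_lower_bound[OF assms(1,2), of n r] assms(2) q
    by (simp add: q_def ennreal_mult'[symmetric] ennreal_leI)
  ultimately show ?thesis by (rule order_trans[rotated])
qed

end
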